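(* Let $\mathcal M=(M,<,\ldots)$ be a definably complete locally o-minimal structure and let $\{X\langle r\rangle\}_{r>0}$ be a definable increasing family of subsets of $M^n$. Then $\dim\left(\bigcup_{r>0}X\langle r\rangle\right)=\sup\{\dim X\langle r\rangle : r>0\}$.
   Context: $\mathcal M$ is an expansion of a dense linear order without endpoints with a distinguished element $0$; definable = with parameters. Definably complete: every definable subset of $M$ has sup and inf in $M\cup\{\pm\infty\}$. Locally o-minimal: for every definable $X\subseteq M$ and $a\in M$ there is an open interval $I\ni a$ with $X\cap I$ a finite union of points and open intervals. A definable increasing family $\{X\langle r\rangle\}_{r>0}$ is a family of fibers $X\langle r\rangle=\{x:(r,x)\in\mathcal X\}$ of a definable set $\mathcal X\subseteq M^{1+n}$ with $X\langle r\rangle\subseteq X\langle r'\rangle$ whenever $0<r<r'$. The dimension of a nonempty definable $X\subseteq M^n$ is the maximal $d$ such that $\pi(X)$ has nonempty interior for some coordinate projection $\pi:M^n\to M^d$ ($M^0$ a point); $\dim\emptyset=-\infty$. *)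

theory Defs
  imports "HOL-Library.Extended_Real"
begin

text \<open>Points of M^n are lists of length n. A "structure" on M (van den Dries,
Tame Topology, Ch. 1) is a sequence D n of collections of subsets of M^n closed
under Boolean operations, cylinders, diagonals and projections. The sets definable
with parameters in a first-order expansion of (M,<) are exactly such a sequence
which moreover contains the order relation and all singletons (parameters).\<close>

definition is_structure :: "(nat \<Rightarrow> 'a::linorder list set set) \<Rightarrow> bool" where
  "is_structure D \<longleftrightarrow>
     (\<forall>n. \<forall>A\<in>D n. A \<subseteq> {x. length x = n}) \<and>
     (\<forall>n. {x. length x = n} \<in> D n) \<and>
     (\<forall>n. \<forall>A\<in>D n. \<forall>B\<in>D n. A \<union> B \<in> D n) \<and>
     (\<forall>n. \<forall>A\<in>D n. {x. length x = n} - A \<in> D n) \<and>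
     (\<forall>n. \<forall>A\<in>D n. {a # y |a y. y \<in> A} \<in> D (Suc n)) \<and>
     (\<forall>n. \<forall>A\<in>D n. {y @ [a] |a y. y \<in> A} \<in> D (Suc n)) \<and>
     (\<forall>n i j. i < n \<longrightarrow> j < n \<longrightarrow> {x. length x = n \<and> x ! i = x ! j} \<in> D n) \<and>
     (\<forall>n. \<forall>A\<in>D (Suc n). butlast ` A \<in> D n)"

definition is_expansion_defsets :: "(nat \<Rightarrow> 'a::linorder list set set) \<Rightarrow> bool" where
  "is_expansion_defsets D \<longleftrightarrow> is_structure D \<and>
     {[x, y] |x y. x < y} \<in> D 2 \<and> (\<forall>a. {[a]} \<in> D 1)"

definition definably_complete :: "(nat \<Rightarrow> 'a::linorder list set set) \<Rightarrow> bool" where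
  "definably_complete D \<longleftrightarrow> (\<forall>A\<in>D 1.
     let S = {a. [a] \<in> A} in
       (S \<noteq> {} \<and> bdd_above S \<longrightarrow> (\<exists>s. (\<forall>x\<in>S. x \<le> s) \<and> (\<forall>t. (\<forall>x\<in>S. x \<le> t) \<longrightarrow> s \<le> t))) \<and>
       (S \<noteq> {} \<and> bdd_below S \<longrightarrow> (\<exists>s. (\<forall>x\<in>S. s \<le> x) \<and> (\<forall>t. (\<forall>x\<in>S. t \<le> x) \<longrightarrow> t \<le> s))))"

definition locally_o_minimal :: "(nat \<Rightarrow> 'a::linorder list set set) \<Rightarrow> bool" where
  "locally_o_minimal D \<longleftrightarrow> (\<forall>A\<in>D 1. \<forall>a.
     \<exists>b c. b < a \<and> a < c \<and>
       (\<exists>P Q. finite P \<and> finite Q \<and>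
          {x. [x] \<in> A} \<inter> {b<..<c} = P \<union> (\<Union>(u, v)\<in>Q. {u<..<v})))"

definition fiber :: "'a list set \<Rightarrow> 'a \<Rightarrow> 'a list set" where
  "fiber XX r = {x. r # x \<in> XX}"

text \<open>A subset of M^d has nonempty interior (order/product topology) iff it
contains an open box.\<close>
definition has_interior :: "nat \<Rightarrow> 'a::linorder list set \<Rightarrow> bool" where
  "has_interior d Y \<longleftrightarrow> (\<exists>a b. length a = d \<and> length b = d \<and> (\<forall>k<d. a ! k < b ! k) \<and>
      {y. length y = d \<and> (\<forall>k<d. a ! k < y ! k \<and> y ! k < b ! k)} \<subseteq> Y)"

definition coord_proj :: "nat list \<Rightarrow> 'a list \<Rightarrow> 'a list" where
  "coord_proj is x = map (\<lambda>i. x ! i) is"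

definition proj_indices :: "nat \<Rightarrow> nat \<Rightarrow> nat list set" where
  "proj_indices n d = {is. length is = d \<and> sorted_wrt (<) is \<and> (\<forall>i\<in>set is. i < n)}"

definition dim :: "nat \<Rightarrow> 'a::linorder list set \<Rightarrow> ereal" where
  "dim n X = (if X = {} then -\<infinity> else
     ereal (of_nat (Max {d. \<exists>is\<in>proj_indices n d. has_interior d (coord_proj is ` X)})))"

end

theory Submission
  imports Defs
begin

text \<open>
  Monotonicity of \<open>dim\<close> gives one inequality. For the other, let a coordinate projection \<open>\<pi>\<close>
  of the union contain an open box. Everything rests on a uniform-witness principle: if a definable
  \<open>R \<subseteq> M \<times> M\<^sup>d\<close> provides, for every \<open>y\<close> in a box, a witness \<open>s\<close> from a definable
  \<open>P \<subseteq> M\<close> with \<open>(s, y) \<in> R\<close>, and \<open>R\<close> is upward closed in \<open>s\<close>, then a single witness works on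
  a subbox. Applied to \<open>R = {(r, \<pi> x) | x \<in> X\<langle>r\<rangle>}\<close> it yields one fibre whose projection
  contains a box.

  The principle is proved by induction on \<open>d\<close>. For \<open>d = 1\<close>: if no witness were uniform on a
  subinterval, each set \<open>F\<^sub>s = {t | (s, t) \<in> R}\<close> would have empty interior, hence by local
  o-minimality and definable completeness a first point after any \<open>p\<close>. These first points form a
  definable set accumulating at \<open>p\<close>, so it contains an interval \<open>(p, r)\<close>, and monotonicity in
  \<open>s\<close> turns the witness of one of its points into a uniform witness on a subinterval after all.
  The induction step applies the induction hypothesis three times: to make the points with
  locally uniform witnesses contain a common left neighbourhood of some \<open>p\<close> over a subbox, to fix a
  common interval \<open>(v, t\<^sub>1)\<close> on which each \<open>y\<close> has a uniform witness, and finally to fix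
  the witness itself.
\<close>

section \<open>Definable sets and first-order formulas\<close>

datatype 'a fm = Atom "'a list set" "nat list" | Neg "'a fm" | Disj "'a fm" "'a fm" | Exists "'a fm"

text \<open>Variables are coordinate positions of the evaluated tuple; \<open>Exists\<close> binds a new last
  coordinate.\<close>

primrec holds :: "'a fm \<Rightarrow> 'a list \<Rightarrow> bool" where
  "holds (Atom A ks) xs \<longleftrightarrow> map (nth xs) ks \<in> A"
| "holds (Neg f) xs \<longleftrightarrow> \<not> holds f xs"
| "holds (Disj f g) xs \<longleftrightarrow> holds f xs \<or> holds g xs"
| "holds (Exists f) xs \<longleftrightarrow> (\<exists>v. holds f (xs @ [v]))"

primrec wf_fm :: "(nat \<Rightarrow> 'a list set set) \<Rightarrow> nat \<Rightarrow> 'a fm \<Rightarrow> bool" where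
  "wf_fm D n (Atom A ks) \<longleftrightarrow> A \<in> D (length ks) \<and> (\<forall>i\<in>set ks. i < n)"
| "wf_fm D n (Neg f) \<longleftrightarrow> wf_fm D n f"
| "wf_fm D n (Disj f g) \<longleftrightarrow> wf_fm D n f \<and> wf_fm D n g"
| "wf_fm D n (Exists f) \<longleftrightarrow> wf_fm D (Suc n) f"

definition Conj :: "'a fm \<Rightarrow> 'a fm \<Rightarrow> 'a fm" where
  "Conj f g = Neg (Disj (Neg f) (Neg g))"

definition Forall :: "'a fm \<Rightarrow> 'a fm" where
  "Forall f = Neg (Exists (Neg f))"

definition Imp :: "'a fm \<Rightarrow> 'a fm \<Rightarrow> 'a fm" where
  "Imp f g = Disj (Neg f) g"

definition Less :: "nat \<Rightarrow> nat \<Rightarrow> 'a::ord fm" where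
  "Less i j = Atom {[x, y] |x y. x < y} [i, j]"

definition Mem :: "'a set \<Rightarrow> nat \<Rightarrow> 'a fm" where
  "Mem X i = Atom {[x] |x. x \<in> X} [i]"

lemma holds_derived [simp]:
  "holds (Conj f g) xs \<longleftrightarrow> holds f xs \<and> holds g xs"
  "holds (Forall f) xs \<longleftrightarrow> (\<forall>v. holds f (xs @ [v]))"
  "holds (Imp f g) xs \<longleftrightarrow> (holds f xs \<longrightarrow> holds g xs)"
  "holds (Less i j) xs \<longleftrightarrow> xs ! i < xs ! j"
  "holds (Mem X i) xs \<longleftrightarrow> xs ! i \<in> X"
  by (auto simp: Conj_def Forall_def Imp_def Less_def Mem_def)

lemma wf_fm_derived [simp]:
  "wf_fm D n (Conj f g) \<longleftrightarrow> wf_fm D n f \<and> wf_fm D n g"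
  "wf_fm D n (Forall f) \<longleftrightarrow> wf_fm D (Suc n) f"
  "wf_fm D n (Imp f g) \<longleftrightarrow> wf_fm D n f \<and> wf_fm D n g"
  by (auto simp: Conj_def Forall_def Imp_def)

text \<open>Positions \<open>1, \<dots>, d\<close> of a tuple \<open>s # y\<close>, kept as a constant because the simplifier would
  otherwise unfold the interval \<open>[Suc 0..<Suc d]\<close>.\<close>

definition tail_positions :: "nat \<Rightarrow> nat list" where
  "tail_positions d = [Suc 0..<Suc d]"

lemma length_tail_positions [simp]: "length (tail_positions d) = d"
  by (simp add: tail_positions_def)

lemma set_tail_positions [simp]: "set (tail_positions d) = {Suc 0..<Suc d}"
  by (simp add: tail_positions_def del: upt_Suc)

lemma map_nth_tail_positions [simp]: "length y = d \<Longrightarrow> map (nth (s # y @ zs)) (tail_positions d) = y"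
  by (rule nth_equalityI) (auto simp: tail_positions_def nth_append simp del: upt_Suc)

locale definable_structure =
  fixes D :: "nat \<Rightarrow> 'a::linorder list set set"
  assumes structure_axioms: "is_structure D"
begin

lemma definable_length: "A \<in> D n \<Longrightarrow> xs \<in> A \<Longrightarrow> length xs = n"
  using structure_axioms[unfolded is_structure_def, THEN conjunct1] by blast

lemma definable_all: "{x. length x = n} \<in> D n"
  using structure_axioms[unfolded is_structure_def, THEN conjunct2, THEN conjunct1] by blast

lemma definable_Un: "A \<in> D n \<Longrightarrow> B \<in> D n \<Longrightarrow> A \<union> B \<in> D n"
  using structure_axioms[unfolded is_structure_def, THEN conjunct2, THEN conjunct2, THEN conjunct1]
  by blast

lemma definable_complement: "A \<in> D n \<Longrightarrow> {x. length x = n} - A \<in> D n"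
  using structure_axioms[unfolded is_structure_def, THEN conjunct2, THEN conjunct2, THEN conjunct2,
      THEN conjunct1]
  by blast

lemma definable_Cons_cylinder: "A \<in> D n \<Longrightarrow> {a # y |a y. y \<in> A} \<in> D (Suc n)"
  using structure_axioms[unfolded is_structure_def, THEN conjunct2, THEN conjunct2, THEN conjunct2,
      THEN conjunct2, THEN conjunct1]
  by blast

lemma definable_diagonal: "i < n \<Longrightarrow> j < n \<Longrightarrow> {x. length x = n \<and> x ! i = x ! j} \<in> D n"
  using structure_axioms[unfolded is_structure_def, THEN conjunct2, THEN conjunct2, THEN conjunct2,
      THEN conjunct2, THEN conjunct2, THEN conjunct2, THEN conjunct1]
  by blast

lemma definable_butlast_image: "A \<in> D (Suc n) \<Longrightarrow> butlast ` A \<in> D n"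
  using structure_axioms[unfolded is_structure_def, THEN conjunct2, THEN conjunct2, THEN conjunct2,
      THEN conjunct2, THEN conjunct2, THEN conjunct2, THEN conjunct2]
  by blast

lemma definable_Int:
  assumes "A \<in> D n" "B \<in> D n"
  shows "A \<inter> B \<in> D n"
proof -
  have "A \<inter> B = {x. length x = n} - (({x. length x = n} - A) \<union> ({x. length x = n} - B))"
    using definable_length assms by blast
  then show ?thesis
    using assms definable_Un definable_complement by metis
qed

lemma definable_Inter_finite:
  "(\<And>j. j < (k::nat) \<Longrightarrow> B j \<in> D n) \<Longrightarrow> {x. length x = n \<and> (\<forall>j<k. x \<in> B j)} \<in> D n"
proof (induction k)
  case 0
  then show ?case using definable_all by simp
next
  case (Suc k)
  have "{x. length x = n \<and> (\<forall>j<Suc k. x \<in> B j)} = {x. length x = n \<and> (\<forall>j<k. x \<in> B j)} \<inter> B k"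
    using less_Suc_eq by auto
  then show ?case using Suc definable_Int by simp
qed

lemma definable_prefix_cylinder: "A \<in> D n \<Longrightarrow> {x. length x = m + n \<and> drop m x \<in> A} \<in> D (m + n)"
proof (induction m)
  case 0
  then have "{x. length x = n \<and> x \<in> A} = A" using definable_length by blast
  with 0 show ?case by simp
next
  case (Suc m)
  have "{x. length x = Suc m + n \<and> drop (Suc m) x \<in> A} =
      {a # w |a w. w \<in> {x. length x = m + n \<and> drop m x \<in> A}}"
    by (auto simp: length_Suc_conv)
  then show ?case using definable_Cons_cylinder[OF Suc.IH[OF Suc.prems]] by simp
qed

lemma definable_take_image: "A \<in> D (n + k) \<Longrightarrow> take n ` A \<in> D n"
proof (induction k arbitrary: A)
  case 0
  then have "take n ` A = A" using definable_length by (force simp: image_iff)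
  then show ?case using 0 by simp
next
  case (Suc k)
  have "take n (butlast xs) = take n xs" if "xs \<in> A" for xs
    using definable_length[OF Suc.prems that] by (simp add: butlast_conv_take min_def)
  then have "take n ` butlast ` A = take n ` A" by (auto simp: image_iff)
  moreover have "take n ` butlast ` A \<in> D n"
    using Suc.IH definable_butlast_image Suc.prems by simp
  ultimately show ?case by simp
qed

lemma definable_map_nth_preimage:
  assumes A: "A \<in> D (length ks)" and ks: "\<forall>i\<in>set ks. i < n"
  shows "{x. length x = n \<and> map (nth x) ks \<in> A} \<in> D n"
proof -
  let ?k = "length ks"
  define T where "T = {w. length w = n + ?k \<and> drop n w \<in> A} \<inter>
    {w. length w = n + ?k \<and> (\<forall>j<?k. w \<in> {w. length w = n + ?k \<and> w ! (n + j) = w ! (ks ! j)})}"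
  have "T \<in> D (n + ?k)"
    unfolding T_def using ks nth_mem
    by (intro definable_Int definable_prefix_cylinder[OF A] definable_Inter_finite definable_diagonal)
      fastforce+
  then have "take n ` T \<in> D n" by (rule definable_take_image)
  moreover have "take n ` T = {x. length x = n \<and> map (nth x) ks \<in> A}"
  proof (intro equalityI subsetI)
    fix x assume "x \<in> take n ` T"
    then obtain w where w: "length w = n + ?k" "drop n w \<in> A" "x = take n w"
      and diag: "\<forall>j<?k. w ! (n + j) = w ! (ks ! j)"
      unfolding T_def by auto
    from w(1,3) diag ks have "drop n w = map (nth x) ks"
      by (auto intro!: nth_equalityI)
    then show "x \<in> {x. length x = n \<and> map (nth x) ks \<in> A}" using w by simp
  next
    fix x assume x: "x \<in> {x. length x = n \<and> map (nth x) ks \<in> A}"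
    then have "x @ map (nth x) ks \<in> T"
      unfolding T_def using ks by (auto simp: nth_append)
    then show "x \<in> take n ` T" using x by (metis (mono_tags) append_eq_conv_conj image_eqI mem_Collect_eq)
  qed
  ultimately show ?thesis by simp
qed

lemma definable_map_nth_image:
  assumes A: "A \<in> D n" and ks: "\<forall>i\<in>set ks. i < n"
  shows "(\<lambda>x. map (nth x) ks) ` A \<in> D (length ks)"
proof -
  let ?k = "length ks"
  define T where "T = {w. length w = ?k + n \<and> drop ?k w \<in> A} \<inter>
    {w. length w = ?k + n \<and> (\<forall>j<?k. w \<in> {w. length w = ?k + n \<and> w ! j = w ! (?k + ks ! j)})}"
  have "T \<in> D (?k + n)"
    unfolding T_def using ks nth_mem
    by (intro definable_Int definable_prefix_cylinder[OF A] definable_Inter_finite definable_diagonal)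
      fastforce+
  then have "take ?k ` T \<in> D ?k" by (rule definable_take_image)
  moreover have "take ?k ` T = (\<lambda>x. map (nth x) ks) ` A"
  proof (intro equalityI subsetI)
    fix y assume "y \<in> take ?k ` T"
    then obtain w where w: "length w = ?k + n" "drop ?k w \<in> A" "y = take ?k w"
      and diag: "\<forall>j<?k. w ! j = w ! (?k + ks ! j)"
      unfolding T_def by auto
    from w(1,3) diag ks have "y = map (nth (drop ?k w)) ks"
      by (auto intro!: nth_equalityI)
    then show "y \<in> (\<lambda>x. map (nth x) ks) ` A" using w(2) by blast
  next
    fix y assume "y \<in> (\<lambda>x. map (nth x) ks) ` A"
    then obtain x where x: "x \<in> A" "y = map (nth x) ks" by blast
    then have "y @ x \<in> T"
      unfolding T_def using ks definable_length[OF A] by (auto simp: nth_append)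
    then show "y \<in> take ?k ` T" using x by (metis (mono_tags) append_eq_conv_conj image_eqI length_map)
  qed
  ultimately show ?thesis by simp
qed

lemma definable_formula: "wf_fm D n f \<Longrightarrow> {x. length x = n \<and> holds f x} \<in> D n"
proof (induction f arbitrary: n)
  case (Atom A ks)
  then show ?case using definable_map_nth_preimage[of A ks n] by simp
next
  case (Neg f)
  have "{x. length x = n \<and> holds (Neg f) x} = {x. length x = n} - {x. length x = n \<and> holds f x}"
    by auto
  then show ?case using Neg definable_complement by simp
next
  case (Disj f g)
  have "{x. length x = n \<and> holds (Disj f g) x} =
      {x. length x = n \<and> holds f x} \<union> {x. length x = n \<and> holds g x}"
    by auto
  then show ?case using Disj definable_Un by simp
next
  case (Exists f)
  have "butlast ` {x. length x = Suc n \<and> holds f x} = {x. length x = n \<and> holds (Exists f) x}"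
  proof (intro equalityI subsetI)
    fix x assume "x \<in> butlast ` {x. length x = Suc n \<and> holds f x}"
    then obtain w where "length w = Suc n" "holds f w" "x = butlast w" by auto
    then show "x \<in> {x. length x = n \<and> holds (Exists f) x}"
      by (cases w rule: rev_cases) auto
  next
    fix x assume "x \<in> {x. length x = n \<and> holds (Exists f) x}"
    then obtain v where "length x = n" "holds f (x @ [v])" by auto
    then show "x \<in> butlast ` {x. length x = Suc n \<and> holds f x}"
      by (metis (mono_tags) butlast_snoc image_eqI length_append_singleton mem_Collect_eq)
  qed
  then show ?case using definable_butlast_image Exists by fastforce
qed

lemma definable_Cons_formula:
  assumes "wf_fm D (Suc d) f" and "\<And>s y. length y = d \<Longrightarrow> holds f (s # y) \<longleftrightarrow> Q s y"
  shows "{s # y |s y. length y = d \<and> Q s y} \<in> D (Suc d)"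
proof -
  have "{x. length x = Suc d \<and> holds f x} = {s # y |s y. length y = d \<and> Q s y}"
    using assms(2) by (auto simp: length_Suc_conv)
  then show ?thesis using definable_formula[OF assms(1)] by simp
qed

definition definable1 :: "'a set \<Rightarrow> bool" where
  "definable1 X \<longleftrightarrow> {[x] |x. x \<in> X} \<in> D 1"

lemma wf_fm_Mem [simp]: "wf_fm D n (Mem X i) \<longleftrightarrow> definable1 X \<and> i < n"
  by (simp add: Mem_def definable1_def)

lemma definable1_formula: "wf_fm D 1 f \<Longrightarrow> definable1 {t. holds f [t]}"
  unfolding definable1_def using definable_Cons_formula[of 0 f "\<lambda>s y. holds f [s]"] by simp

lemma definable1_by_formula: "wf_fm D 1 f \<Longrightarrow> (\<And>t. holds f [t] \<longleftrightarrow> t \<in> X) \<Longrightarrow> definable1 X"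
  using definable1_formula[of f] by simp

lemma definable1_Int: "definable1 X \<Longrightarrow> definable1 Y \<Longrightarrow> definable1 (X \<inter> Y)"
  using definable1_formula[of "Conj (Mem X 0) (Mem Y 0)"] by (simp add: Collect_conj_eq)

lemma definable1_Compl: "definable1 X \<Longrightarrow> definable1 (- X)"
  using definable1_formula[of "Neg (Mem X 0)"] by (simp add: Compl_eq)

end


locale ordered_expansion = definable_structure +
  assumes definable_less: "{[x, y] |x y. x < y} \<in> D 2"
    and definable_singleton: "{[a]} \<in> D 1"
begin

lemma wf_fm_Less [simp]: "wf_fm D n (Less i j) \<longleftrightarrow> i < n \<and> j < n"
  using definable_less by (auto simp: Less_def numeral_2_eq_2)

lemma definable1_singleton: "definable1 {a}"
  using definable_singleton by (simp add: definable1_def)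

lemma definable1_lessThan: "definable1 {..<a}"
  using definable1_formula[of "Exists (Conj (Less 0 1) (Mem {a} 1))"] definable1_singleton
  by (simp add: lessThan_def)

lemma definable1_greaterThan: "definable1 {a<..}"
  using definable1_formula[of "Exists (Conj (Less 1 0) (Mem {a} 1))"] definable1_singleton
  by (simp add: greaterThan_def)

lemma definable1_intervals:
  "definable1 {..<a}" "definable1 {a<..}" "definable1 {a..}" "definable1 {..a}" "definable1 {a<..<b}"
  using definable1_lessThan definable1_greaterThan definable1_Compl[OF definable1_lessThan]
    definable1_Compl[OF definable1_greaterThan] definable1_Int[OF definable1_greaterThan definable1_lessThan]
  by (simp_all add: greaterThanLessThan_eq)

lemma definable_fiber:
  assumes A: "A \<in> D (m + k)" and ps: "length ps = k"
  shows "{u. length u = m \<and> u @ ps \<in> A} \<in> D m"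
proof -
  define T where "T = A \<inter> {x. length x = m + k \<and>
    (\<forall>j<k. x \<in> {x. length x = m + k \<and> map (nth x) [m + j] \<in> {[ps ! j]}})}"
  have "T \<in> D (m + k)"
    unfolding T_def
    by (intro definable_Int[OF A] definable_Inter_finite definable_map_nth_preimage)
      (auto intro: definable_singleton[simplified])
  then have "take m ` T \<in> D m" by (rule definable_take_image)
  moreover have "take m ` T = {u. length u = m \<and> u @ ps \<in> A}"
  proof (intro equalityI subsetI)
    fix u assume "u \<in> take m ` T"
    then obtain x where x: "x \<in> A" "length x = m + k" "u = take m x" and params: "\<forall>j<k. x ! (m + j) = ps ! j"
      unfolding T_def by auto
    have "drop m x = ps"
      using x(2) ps params by (auto intro!: nth_equalityI)
    then have "x = u @ ps" using x(3) by (metis append_take_drop_id)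
    then show "u \<in> {u. length u = m \<and> u @ ps \<in> A}" using x(1,2) ps by auto
  next
    fix u assume u: "u \<in> {u. length u = m \<and> u @ ps \<in> A}"
    then have "u @ ps \<in> T" unfolding T_def using ps by (auto simp: nth_append)
    then show "u \<in> take m ` T" using u by (metis (mono_tags) append_eq_conv_conj image_eqI mem_Collect_eq)
  qed
  ultimately show ?thesis by simp
qed

lemma definable1_fiber:
  assumes "A \<in> D (Suc d)" "length y = d"
  shows "definable1 {t. t # y \<in> A}"
proof -
  have "{u. length u = 1 \<and> u @ y \<in> A} = {[t] |t. t \<in> {t. t # y \<in> A}}"
    by (auto simp: length_Suc_conv)
  then show ?thesis
    using definable_fiber[of A 1 d y] assms by (simp add: definable1_def)
qed

end


section \<open>Local finiteness in a linear order\<close>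

definition locally_finite_union :: "'a::linorder set \<Rightarrow> 'a \<Rightarrow> bool" where
  "locally_finite_union X x \<longleftrightarrow> (\<exists>b c P Q. b < x \<and> x < c \<and> finite P \<and> finite Q \<and>
     (\<forall>t. b < t \<and> t < c \<longrightarrow> (t \<in> X \<longleftrightarrow> t \<in> P \<or> (\<exists>(u, v)\<in>Q. u < t \<and> t < v))))"

lemma locally_finite_unionE:
  assumes "locally_finite_union X x"
  obtains b c P Q where "b < x" "x < c" "finite P" "finite Q"
    "\<And>t. b < t \<Longrightarrow> t < c \<Longrightarrow> t \<in> X \<longleftrightarrow> t \<in> P \<or> (\<exists>(u, v)\<in>Q. u < t \<and> t < v)"
proof -
  from assms obtain b c P Q where "b < x \<and> x < c \<and> finite P \<and> finite Q \<and>
      (\<forall>t. b < t \<and> t < c \<longrightarrow> (t \<in> X \<longleftrightarrow> t \<in> P \<or> (\<exists>(u, v)\<in>Q. u < t \<and> t < v)))"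
    unfolding locally_finite_union_def by blast
  then show ?thesis by (intro that[of b c P Q]) auto
qed

lemma locally_finite_unionI:
  assumes "b < x" "x < c" "finite P" "finite Q"
    and "\<And>t. b < t \<Longrightarrow> t < c \<Longrightarrow> t \<in> X \<longleftrightarrow> t \<in> P \<or> (\<exists>(u, v)\<in>Q. u < t \<and> t < v)"
  shows "locally_finite_union X x"
  unfolding locally_finite_union_def
  by (rule exI[of _ b], rule exI[of _ c], rule exI[of _ P], rule exI[of _ Q]) (use assms in auto)

lemma locally_finite_union_gap_right:
  fixes x :: "'a::linorder"
  assumes "locally_finite_union X x" and no_interval: "\<And>u v. u < v \<Longrightarrow> \<not> {u<..<v} \<subseteq> X"
  shows "\<exists>q>x. {x<..<q} \<inter> X = {}"
proof -
  obtain b c P Q where bc: "b < x" "x < c" "finite P" "finite Q"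
    and dec: "\<And>t. b < t \<Longrightarrow> t < c \<Longrightarrow> t \<in> X \<longleftrightarrow> t \<in> P \<or> (\<exists>(u, v)\<in>Q. u < t \<and> t < v)"
    using assms(1) by (elim locally_finite_unionE) blast
  have in_P: "t \<in> P" if t: "t \<in> X" "b < t" "t < c" for t
  proof (rule ccontr)
    assume "t \<notin> P"
    then obtain u v where uv: "(u, v) \<in> Q" "u < t" "t < v" using dec[of t] t by auto
    have "t' \<in> X" if "max u b < t'" "t' < min v c" for t'
      using dec[of t'] uv(1) that by auto
    then have "{max u b<..<min v c} \<subseteq> X" by auto
    moreover have "max u b < min v c" using uv t by auto
    ultimately show False using no_interval by blast
  qed
  define q where "q = Min (insert c {t\<in>P. x < t})"
  have fin: "finite (insert c {t\<in>P. x < t})" using bc(3) by simp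
  have "x < q" unfolding q_def using fin bc(2) by (subst Min_gr_iff) auto
  moreover have "t \<notin> X" if "x < t" "t < q" for t
  proof
    assume "t \<in> X"
    have "t < c" using that fin unfolding q_def by (meson Min_le insertI1 less_le_trans)
    then have "t \<in> P" using in_P \<open>t \<in> X\<close> bc(1) that(1) by auto
    then have "q \<le> t" unfolding q_def using fin that(1) by (intro Min_le) auto
    then show False using that(2) by simp
  qed
  ultimately show ?thesis by auto
qed

lemma locally_finite_union_right_nbhd:
  fixes x :: "'a::linorder"
  assumes "locally_finite_union X x" and accumulates: "\<And>q. x < q \<Longrightarrow> \<exists>t\<in>X. x < t \<and> t < q"
  shows "\<exists>q>x. {x<..<q} \<subseteq> X"
proof -
  obtain b c P Q where bc: "b < x" "x < c" "finite P" "finite Q"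
    and dec: "\<And>t. b < t \<Longrightarrow> t < c \<Longrightarrow> t \<in> X \<longleftrightarrow> t \<in> P \<or> (\<exists>(u, v)\<in>Q. u < t \<and> t < v)"
    using assms(1) by (elim locally_finite_unionE) blast
  define K where "K = insert c ({t\<in>P. x < t} \<union> {u. \<exists>v. (u, v) \<in> Q \<and> x < u})"
  have "{u. \<exists>v. (u, v) \<in> Q \<and> x < u} \<subseteq> fst ` Q" by force
  then have "finite {u. \<exists>v. (u, v) \<in> Q \<and> x < u}" using finite_subset finite_imageI[OF bc(4)] by blast
  then have fin: "finite K" unfolding K_def using bc(3) by simp
  define q0 where "q0 = Min K"
  have "x < q0" unfolding q0_def using fin bc(2) by (subst Min_gr_iff) (auto simp: K_def)
  have q0c: "q0 \<le> c" unfolding q0_def using fin by (simp add: K_def)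
  obtain t where t: "t \<in> X" "x < t" "t < q0" using accumulates \<open>x < q0\<close> by blast
  have "t \<notin> P"
  proof
    assume "t \<in> P"
    then have "q0 \<le> t" unfolding q0_def using fin t(2) by (intro Min_le) (auto simp: K_def)
    then show False using t(3) by simp
  qed
  moreover have "t \<in> P \<or> (\<exists>(u, v)\<in>Q. u < t \<and> t < v)" using dec[of t] t q0c bc(1) by auto
  ultimately obtain u v where uv: "(u, v) \<in> Q" "u < t" "t < v" by auto
  have "u \<le> x"
  proof (rule ccontr)
    assume "\<not> u \<le> x"
    then have "q0 \<le> u" unfolding q0_def using fin uv(1) by (intro Min_le) (auto simp: K_def)
    then show False using uv(2) t(3) by simp
  qed
  have "t' \<in> X" if "x < t'" "t' < min v q0" for t'
    using dec[of t'] uv(1) \<open>u \<le> x\<close> q0c bc(1) that by (auto intro!: bexI[of _ "(u, v)"])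
  then have "{x<..<min v q0} \<subseteq> X" by auto
  moreover have "x < min v q0" using uv t \<open>x < q0\<close> by simp
  ultimately show ?thesis by blast
qed

lemma locally_finite_union_left_nbhd:
  fixes x :: "'a::linorder"
  assumes "locally_finite_union X x" and accumulates: "\<And>q. q < x \<Longrightarrow> \<exists>t\<in>X. q < t \<and> t < x"
  shows "\<exists>q<x. {q<..<x} \<subseteq> X"
proof -
  obtain b c P Q where bc: "b < x" "x < c" "finite P" "finite Q"
    and dec: "\<And>t. b < t \<Longrightarrow> t < c \<Longrightarrow> t \<in> X \<longleftrightarrow> t \<in> P \<or> (\<exists>(u, v)\<in>Q. u < t \<and> t < v)"
    using assms(1) by (elim locally_finite_unionE) blast
  define K where "K = insert b ({t\<in>P. t < x} \<union> {v. \<exists>u. (u, v) \<in> Q \<and> v < x})"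
  have "{v. \<exists>u. (u, v) \<in> Q \<and> v < x} \<subseteq> snd ` Q" by force
  then have "finite {v. \<exists>u. (u, v) \<in> Q \<and> v < x}" using finite_subset finite_imageI[OF bc(4)] by blast
  then have fin: "finite K" unfolding K_def using bc(3) by simp
  define q0 where "q0 = Max K"
  have "q0 < x" unfolding q0_def using fin bc(1) by (subst Max_less_iff) (auto simp: K_def)
  have bq0: "b \<le> q0" unfolding q0_def using fin by (simp add: K_def)
  obtain t where t: "t \<in> X" "q0 < t" "t < x" using accumulates \<open>q0 < x\<close> by blast
  have "t \<notin> P"
  proof
    assume "t \<in> P"
    then have "t \<le> q0" unfolding q0_def using fin t(3) by (intro Max_ge) (auto simp: K_def)
    then show False using t(2) by simp
  qed
  moreover have "t \<in> P \<or> (\<exists>(u, v)\<in>Q. u < t \<and> t < v)" using dec[of t] t bq0 bc(2) by auto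
  ultimately obtain u v where uv: "(u, v) \<in> Q" "u < t" "t < v" by auto
  have "x \<le> v"
  proof (rule ccontr)
    assume "\<not> x \<le> v"
    then have "v \<le> q0" unfolding q0_def using fin uv(1) by (intro Max_ge) (auto simp: K_def)
    then show False using uv(3) t(2) by simp
  qed
  have "t' \<in> X" if "max u q0 < t'" "t' < x" for t'
    using dec[of t'] uv(1) \<open>x \<le> v\<close> bq0 bc(2) that by (auto intro!: bexI[of _ "(u, v)"])
  then have "{max u q0<..<x} \<subseteq> X" by auto
  moreover have "max u q0 < x" using uv t \<open>q0 < x\<close> by simp
  ultimately show ?thesis by blast
qed


lemma le_if_disjoint_interval:
  fixes u :: "'a::linorder"
  shows "{a<..<q} \<inter> X = {} \<Longrightarrow> u \<in> X \<Longrightarrow> a < u \<Longrightarrow> q \<le> u"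
  by (metis IntI empty_iff greaterThanLessThan_iff not_le)

lemma interval_subset_of_first_points:
  fixes F :: "'b::linorder \<Rightarrow> 'a::linorder set"
  assumes upward: "\<And>t s s'. s \<in> P \<Longrightarrow> s' \<in> P \<Longrightarrow> t \<in> F s \<Longrightarrow> s \<le> s' \<Longrightarrow> t \<in> F s'"
    and first: "\<And>t. p < t \<Longrightarrow> t < r \<Longrightarrow> \<exists>s\<in>P. t \<in> F s \<and> {p<..<t} \<inter> F s = {}"
    and "p < t1" "s1 \<in> P" "t1 \<in> F s1"
  shows "{t1<..<r} \<subseteq> F s1"
proof
  fix t assume t: "t \<in> {t1<..<r}"
  then have "p < t" "t < r" using \<open>p < t1\<close> by auto
  then obtain st where st: "st \<in> P" "t \<in> F st" "{p<..<t} \<inter> F st = {}"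
    using first by blast
  show "t \<in> F s1"
  proof (cases "st \<le> s1")
    case True
    show ?thesis by (rule upward[OF st(1) \<open>s1 \<in> P\<close> st(2) True])
  next
    case False
    then have "s1 \<le> st" by simp
    with \<open>s1 \<in> P\<close> st(1) \<open>t1 \<in> F s1\<close> have "t1 \<in> F st" by (rule upward)
    then show ?thesis using st(3) t \<open>p < t1\<close> by auto
  qed
qed

section \<open>Boxes and dimension\<close>

definition open_box :: "'a::ord list \<Rightarrow> 'a list \<Rightarrow> 'a list set" where
  "open_box a b = {y. length y = length a \<and> (\<forall>k<length a. a ! k < y ! k \<and> y ! k < b ! k)}"

definition proper_box :: "nat \<Rightarrow> 'a::ord list \<Rightarrow> 'a list \<Rightarrow> bool" where
  "proper_box d a b \<longleftrightarrow> length a = d \<and> length b = d \<and> (\<forall>k<d. a ! k < b ! k)"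

definition subbox :: "'a::ord list \<Rightarrow> 'a list \<Rightarrow> 'a list \<Rightarrow> 'a list \<Rightarrow> bool" where
  "subbox a' b' a b \<longleftrightarrow> proper_box (length a) a' b' \<and> (\<forall>k<length a. a ! k \<le> a' ! k \<and> b' ! k \<le> b ! k)"

lemma length_if_in_proper_box: "proper_box d a b \<Longrightarrow> y \<in> open_box a b \<Longrightarrow> length y = d"
  by (simp add: open_box_def proper_box_def)

lemma Cons_in_open_box_iff:
  "t # y \<in> open_box (a0 # a) (b0 # b) \<longleftrightarrow> a0 < t \<and> t < b0 \<and> y \<in> open_box a b"
  unfolding open_box_def by (simp add: All_less_Suc2) blast

lemma in_open_box_Cons_cases:
  assumes "x \<in> open_box (a0 # a) (b0 # b)"
  obtains t y where "x = t # y" "a0 < t" "t < b0" "y \<in> open_box a b"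
proof (cases x)
  case Nil
  then show ?thesis using assms by (simp add: open_box_def)
next
  case (Cons t y)
  then show ?thesis using assms that by (simp add: Cons_in_open_box_iff)
qed

lemma proper_box_Cons:
  "proper_box (Suc d) (a0 # a) (b0 # b) \<longleftrightarrow> a0 < b0 \<and> proper_box d a b"
  unfolding proper_box_def by (auto simp: All_less_Suc2)

lemma proper_box_Suc_cases:
  assumes "proper_box (Suc d) a b"
  obtains a0 a' b0 b' where "a = a0 # a'" "b = b0 # b'" "a0 < b0" "proper_box d a' b'"
proof -
  obtain a0 a' b0 b' where "a = a0 # a'" "b = b0 # b'"
    using assms by (cases a; cases b) (auto simp: proper_box_def)
  with assms show ?thesis by (auto simp: proper_box_Cons intro: that)
qed

lemma subbox_Cons:
  "subbox (a1 # a') (b1 # b') (a0 # a) (b0 # b) \<longleftrightarrow> a0 \<le> a1 \<and> a1 < b1 \<and> b1 \<le> b0 \<and> subbox a' b' a b"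
  unfolding subbox_def proper_box_def by (auto simp: All_less_Suc2)

lemma proper_box_if_subbox: "proper_box d a b \<Longrightarrow> subbox a' b' a b \<Longrightarrow> proper_box d a' b'"
  by (simp add: subbox_def proper_box_def)

lemma open_box_mono:
  fixes a :: "'a::preorder list"
  shows "subbox a' b' a b \<Longrightarrow> open_box a' b' \<subseteq> open_box a b"
  unfolding subbox_def proper_box_def open_box_def by (auto intro: le_less_trans less_le_trans)

lemma subbox_trans:
  fixes a :: "'a::preorder list"
  shows "subbox a'' b'' a' b' \<Longrightarrow> subbox a' b' a b \<Longrightarrow> subbox a'' b'' a b"
  unfolding subbox_def proper_box_def by (metis order_trans)

lemma open_box_nonempty:
  fixes a :: "'a::dense_linorder list"
  assumes "proper_box d a b"
  shows "open_box a b \<noteq> {}"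
proof -
  have "\<forall>k<d. \<exists>t. a ! k < t \<and> t < b ! k" using assms dense by (auto simp: proper_box_def)
  then obtain f where f: "\<forall>k<d. a ! k < f k \<and> f k < b ! k" by metis
  then have "map f [0..<d] \<in> open_box a b" using assms by (simp add: open_box_def proper_box_def)
  then show ?thesis by blast
qed

lemma has_interior_iff: "has_interior d Y \<longleftrightarrow> (\<exists>a b. proper_box d a b \<and> open_box a b \<subseteq> Y)"
  unfolding has_interior_def proper_box_def open_box_def
  by (intro iffI; elim exE conjE; intro exI conjI) auto

lemma Cons_in_coord_proj_Suc_image:
  assumes "\<And>x. x \<in> X \<Longrightarrow> x \<noteq> []"
  shows "r # y \<in> coord_proj (0 # map Suc ks) ` X \<longleftrightarrow> y \<in> coord_proj ks ` fiber X r"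
proof
  assume "r # y \<in> coord_proj (0 # map Suc ks) ` X"
  then obtain x where "x \<in> X" "r # y = coord_proj (0 # map Suc ks) x" by auto
  moreover obtain x' where "x = r # x'"
    using calculation assms by (cases x) (auto simp: coord_proj_def)
  ultimately show "y \<in> coord_proj ks ` fiber X r" by (auto simp: coord_proj_def fiber_def)
next
  assume "y \<in> coord_proj ks ` fiber X r"
  then obtain x where "r # x \<in> X" "y = coord_proj ks x" by (auto simp: fiber_def)
  then have "r # y = coord_proj (0 # map Suc ks) (r # x)" by (simp add: coord_proj_def)
  with \<open>r # x \<in> X\<close> show "r # y \<in> coord_proj (0 # map Suc ks) ` X" by blast
qed

definition interior_dims :: "nat \<Rightarrow> 'a::linorder list set \<Rightarrow> nat set" where
  "interior_dims n X = {d. \<exists>ks\<in>proj_indices n d. has_interior d (coord_proj ks ` X)}"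

lemma dim_eq_Max_interior_dims:
  "dim n X = (if X = {} then -\<infinity> else ereal (of_nat (Max (interior_dims n X))))"
  unfolding dim_def interior_dims_def by simp

lemma interior_dims_le: "d \<in> interior_dims n X \<Longrightarrow> d \<le> n"
proof -
  assume "d \<in> interior_dims n X"
  then obtain ks where ks: "length ks = d" "sorted_wrt (<) ks" "\<forall>i\<in>set ks. i < n"
    unfolding interior_dims_def proj_indices_def by blast
  then have "card (set ks) = d" by (metis distinct_card strict_sorted_iff)
  moreover have "set ks \<subseteq> {..<n}" using ks(3) by auto
  ultimately show "d \<le> n" by (metis card_lessThan card_mono finite_lessThan)
qed

lemma finite_interior_dims: "finite (interior_dims n X)"
  using interior_dims_le by (meson finite_atMost finite_subset subsetI atMost_iff)

lemma zero_in_interior_dims: "X \<noteq> {} \<Longrightarrow> 0 \<in> interior_dims n X"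
  unfolding interior_dims_def proj_indices_def has_interior_def coord_proj_def by auto

lemma has_interior_mono:
  assumes "has_interior d X" "X \<subseteq> Y"
  shows "has_interior d Y"
proof -
  obtain a b where "proper_box d a b" "open_box a b \<subseteq> X" using assms(1) by (auto simp: has_interior_iff)
  moreover from this(2) assms(2) have "open_box a b \<subseteq> Y" by (rule order_trans)
  ultimately show ?thesis unfolding has_interior_iff by blast
qed

lemma interior_dims_mono:
  assumes "X \<subseteq> Y"
  shows "interior_dims n X \<subseteq> interior_dims n Y"
proof
  fix d assume "d \<in> interior_dims n X"
  then obtain ks where "ks \<in> proj_indices n d" "has_interior d (coord_proj ks ` X)"
    by (auto simp: interior_dims_def)
  moreover have "coord_proj ks ` X \<subseteq> coord_proj ks ` Y" using assms by (rule image_mono)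
  ultimately show "d \<in> interior_dims n Y" by (auto simp: interior_dims_def intro: has_interior_mono)
qed

lemma dim_mono:
  assumes "X \<subseteq> Y"
  shows "dim n X \<le> dim n Y"
proof (cases "X = {}")
  case False
  then have "Max (interior_dims n X) \<le> Max (interior_dims n Y)"
    using Max_mono[OF interior_dims_mono[OF assms] _ finite_interior_dims] zero_in_interior_dims by blast
  with False assms show ?thesis by (auto simp: dim_eq_Max_interior_dims)
qed (simp add: dim_eq_Max_interior_dims)

lemma dim_attained:
  assumes "X \<noteq> {}"
  obtains d ks where "dim n X = ereal (of_nat d)" "ks \<in> proj_indices n d" "has_interior d (coord_proj ks ` X)"
proof -
  let ?d = "Max (interior_dims n X)"
  have "?d \<in> interior_dims n X"
    using finite_interior_dims zero_in_interior_dims[OF assms] by (intro Max_in) auto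
  then show ?thesis
    using that assms by (auto simp: interior_dims_def dim_eq_Max_interior_dims)
qed

lemma dim_ge_if_interior:
  fixes X :: "'a::dense_linorder list set"
  assumes "ks \<in> proj_indices n d" "has_interior d (coord_proj ks ` X)"
  shows "ereal (of_nat d) \<le> dim n X"
proof -
  have "X \<noteq> {}" using assms(2) open_box_nonempty by (fastforce simp: has_interior_iff)
  moreover have "d \<in> interior_dims n X" using assms by (auto simp: interior_dims_def)
  ultimately show ?thesis
    using Max_ge[OF finite_interior_dims] by (simp add: dim_eq_Max_interior_dims)
qed

section \<open>Uniform witnesses in locally o-minimal structures\<close>

definition local_witnesses :: "'a::linorder list set \<Rightarrow> 'a set \<Rightarrow> 'a \<Rightarrow> 'a \<Rightarrow> 'a list \<Rightarrow> 'a set" where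
  "local_witnesses R P a b y = {t. \<exists>a' b'. a \<le> a' \<and> a' < t \<and> t < b' \<and> b' \<le> b \<and>
     (\<exists>s\<in>P. \<forall>t'. a' < t' \<and> t' < b' \<longrightarrow> s # t' # y \<in> R)}"

locale dc_locally_o_minimal = ordered_expansion D for D :: "nat \<Rightarrow> 'a::dense_linorder list set set" +
  assumes complete: "definably_complete D"
    and local_o_min: "locally_o_minimal D"
begin

lemma definable1_locally_finite_union:
  assumes "definable1 X"
  shows "locally_finite_union X x"
proof -
  have "\<exists>b c. b < x \<and> x < c \<and> (\<exists>P Q. finite P \<and> finite Q \<and>
      {t. [t] \<in> {[t] |t. t \<in> X}} \<inter> {b<..<c} = P \<union> (\<Union>(u, v)\<in>Q. {u<..<v}))"
    using local_o_min[unfolded locally_o_minimal_def, rule_format, OF assms[unfolded definable1_def]] .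
  then obtain b c P Q where bc: "b < x" "x < c" "finite P" "finite Q"
    and dec: "X \<inter> {b<..<c} = P \<union> (\<Union>(u, v)\<in>Q. {u<..<v})"
    by auto
  have "t \<in> X \<longleftrightarrow> t \<in> P \<or> (\<exists>(u, v)\<in>Q. u < t \<and> t < v)" if "b < t" "t < c" for t
    using dec[THEN eqset_imp_iff, of t] that by (auto split: prod.splits)
  with bc show ?thesis by (rule locally_finite_unionI)
qed

lemma definable1_Inf:
  assumes "definable1 X" "t \<in> X" "\<And>u. u \<in> X \<Longrightarrow> m0 \<le> u"
  shows "\<exists>m. (\<forall>u\<in>X. m \<le> u) \<and> (\<forall>m'. (\<forall>u\<in>X. m' \<le> u) \<longrightarrow> m' \<le> m)"
proof -
  have "X \<noteq> {} \<and> bdd_below X \<longrightarrow>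
      (\<exists>m. (\<forall>u\<in>X. m \<le> u) \<and> (\<forall>m'. (\<forall>u\<in>X. m' \<le> u) \<longrightarrow> m' \<le> m))"
    using complete[unfolded definably_complete_def, rule_format, OF assms(1)[unfolded definable1_def]]
    by (simp add: Let_def)
  moreover have "X \<noteq> {} \<and> bdd_below X" using assms(2,3) by (auto simp: bdd_below_def)
  ultimately show ?thesis by blast
qed

lemma first_point_after:
  assumes X: "definable1 X" and no_interval: "\<And>u v. u < v \<Longrightarrow> \<not> {u<..<v} \<subseteq> X"
    and "p < t'" "t' \<in> X"
  shows "\<exists>m\<in>X. p < m \<and> m \<le> t' \<and> {p<..<m} \<inter> X = {}"
proof -
  define S where "S = X \<inter> {p<..} \<inter> {..t'}"
  have "definable1 S" unfolding S_def by (intro definable1_Int X definable1_intervals)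
  have t'S: "t' \<in> S" using assms(3,4) by (simp add: S_def)
  have p_lower: "p \<le> u" if "u \<in> S" for u using that by (simp add: S_def less_imp_le)
  obtain m where "\<forall>u\<in>S. m \<le> u" and "\<forall>m'. (\<forall>u\<in>S. m' \<le> u) \<longrightarrow> m' \<le> m"
    using definable1_Inf[OF \<open>definable1 S\<close> t'S p_lower] by blast
  then have lower: "\<And>u. u \<in> S \<Longrightarrow> m \<le> u"
    and greatest: "\<And>m'. (\<And>u. u \<in> S \<Longrightarrow> m' \<le> u) \<Longrightarrow> m' \<le> m"
    by blast+
  have gap: "\<exists>q>y. {y<..<q} \<inter> X = {}" for y
    using locally_finite_union_gap_right[OF definable1_locally_finite_union[OF X] no_interval] .
  have "p \<le> m" using p_lower by (rule greatest)
  have "m \<le> t'" using t'S by (rule lower)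
  have "p < m"
  proof (rule ccontr)
    assume "\<not> p < m"
    obtain q where "p < q" and disjoint: "{p<..<q} \<inter> X = {}" using gap by blast
    have "q \<le> m" by (rule greatest, rule le_if_disjoint_interval[OF disjoint]) (auto simp: S_def)
    then show False using \<open>\<not> p < m\<close> \<open>p < q\<close> by order
  qed
  moreover have "m \<in> X"
  proof (rule ccontr)
    assume "m \<notin> X"
    obtain q where "m < q" and disjoint: "{m<..<q} \<inter> X = {}" using gap by blast
    have "m < u" if "u \<in> S" for u using lower[OF that] that \<open>m \<notin> X\<close> by (auto simp: S_def order_le_less)
    then have "q \<le> m" by (intro greatest le_if_disjoint_interval[OF disjoint]) (auto simp: S_def)
    then show False using \<open>m < q\<close> by simp
  qed
  moreover have "u \<notin> X" if "p < u" "u < m" for u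
  proof
    assume "u \<in> X"
    with that \<open>m \<le> t'\<close> have "u \<in> S" by (simp add: S_def less_le_trans[THEN less_imp_le])
    then show False using lower that(2) by (meson leD)
  qed
  ultimately show ?thesis using \<open>m \<le> t'\<close> by auto
qed

definition witness_fiber :: "'a list set \<Rightarrow> 'a \<Rightarrow> 'a \<Rightarrow> 'a \<Rightarrow> 'a set" where
  "witness_fiber R a b s = {t. a < t \<and> t < b \<and> [s, t] \<in> R}"

lemma witness_fiber_definable: "R \<in> D 2 \<Longrightarrow> definable1 (witness_fiber R a b s)"
  by (rule definable1_by_formula[of "Conj (Mem {a<..<b} 0) (Exists (Conj (Mem {s} 1) (Atom R [1, 0])))"])
    (auto simp: witness_fiber_def numeral_2_eq_2 definable1_intervals definable1_singleton)

lemma first_points_right_nbhd: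
  assumes R: "R \<in> D 2" and P: "definable1 P" and p: "a < p" "p < b"
    and witness: "\<And>t. a < t \<Longrightarrow> t < b \<Longrightarrow> \<exists>s\<in>P. [s, t] \<in> R"
    and no_interval: "\<And>s u v. s \<in> P \<Longrightarrow> u < v \<Longrightarrow> \<not> {u<..<v} \<subseteq> witness_fiber R a b s"
  shows "\<exists>r>p. \<forall>t. p < t \<and> t < r \<longrightarrow>
    (\<exists>s\<in>P. t \<in> witness_fiber R a b s \<and> {p<..<t} \<inter> witness_fiber R a b s = {})"
proof -
  define E where "E = {t. p < t \<and> (\<exists>s\<in>P. t \<in> witness_fiber R a b s \<and> {p<..<t} \<inter> witness_fiber R a b s = {})}"
  have "definable1 E"
  proof (rule definable1_by_formula)
    let ?f = "Conj (Mem {p<..} 0) (Exists (Conj (Mem P 1) (Conj (Mem {a<..<b} 0)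
        (Conj (Atom R [1, 0]) (Forall (Imp (Conj (Mem {p<..} 2) (Less 2 0))
          (Neg (Conj (Mem {a<..<b} 2) (Atom R [1, 2])))))))))"
    show "wf_fm D 1 ?f" by (simp add: R[unfolded numeral_2_eq_2] P definable1_intervals)
    show "holds ?f [t] \<longleftrightarrow> t \<in> E" for t
      unfolding E_def witness_fiber_def disjoint_iff by (simp add: conj_ac Bex_def)
  qed
  moreover have "\<exists>t\<in>E. p < t \<and> t < q" if "p < q" for q
  proof -
    obtain t' where t': "p < t'" "t' < min q b" using \<open>p < q\<close> p dense by (metis min_less_iff_conj)
    then obtain s where s: "s \<in> P" "t' \<in> witness_fiber R a b s"
      using witness less_trans[OF p(1) t'(1)] by (auto simp: witness_fiber_def)
    then obtain m where "m \<in> witness_fiber R a b s" "p < m" "m \<le> t'" "{p<..<m} \<inter> witness_fiber R a b s = {}"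
      using first_point_after[OF witness_fiber_definable[OF R] no_interval[OF s(1)] t'(1) s(2)] by blast
    moreover have "m < q" using le_less_trans[OF \<open>m \<le> t'\<close>] t'(2) by simp
    ultimately show ?thesis using \<open>s \<in> P\<close> unfolding E_def by blast
  qed
  ultimately obtain r where "p < r" "{p<..<r} \<subseteq> E"
    using locally_finite_union_right_nbhd definable1_locally_finite_union by blast
  then have "\<forall>t. p < t \<and> t < r \<longrightarrow>
      (\<exists>s\<in>P. t \<in> witness_fiber R a b s \<and> {p<..<t} \<inter> witness_fiber R a b s = {})"
    unfolding E_def by auto
  with \<open>p < r\<close> show ?thesis by blast
qed

lemma uniform_witness_on_interval:
  assumes R: "R \<in> D 2" and P: "definable1 P" and "a < b"
    and witness: "\<And>t. a < t \<Longrightarrow> t < b \<Longrightarrow> \<exists>s\<in>P. [s, t] \<in> R"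
    and upward: "\<And>t s s'. a < t \<Longrightarrow> t < b \<Longrightarrow> s \<in> P \<Longrightarrow> s' \<in> P \<Longrightarrow> [s, t] \<in> R \<Longrightarrow> s \<le> s' \<Longrightarrow>
      [s', t] \<in> R"
  shows "\<exists>a' b'. a \<le> a' \<and> a' < b' \<and> b' \<le> b \<and> (\<exists>s\<in>P. \<forall>t. a' < t \<and> t < b' \<longrightarrow> [s, t] \<in> R)"
proof (rule ccontr)
  assume no_uniform: "\<not> ?thesis"
  let ?F = "witness_fiber R a b"
  have no_interval: "\<not> {u<..<v} \<subseteq> ?F s" if "s \<in> P" "u < v" for s u v
  proof
    assume sub: "{u<..<v} \<subseteq> ?F s"
    obtain t where "u < t" "t < v" using \<open>u < v\<close> dense by blast
    with sub have "max u a < min v b" by (auto simp: witness_fiber_def)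
    moreover have "\<forall>t. max u a < t \<and> t < min v b \<longrightarrow> [s, t] \<in> R" using sub by (auto simp: witness_fiber_def)
    ultimately have "a \<le> max u a \<and> max u a < min v b \<and> min v b \<le> b \<and>
        (\<exists>s\<in>P. \<forall>t. max u a < t \<and> t < min v b \<longrightarrow> [s, t] \<in> R)"
      using \<open>s \<in> P\<close> by auto
    then show False using no_uniform by blast
  qed
  obtain p where p: "a < p" "p < b" using \<open>a < b\<close> dense by blast
  obtain r where "p < r" and first: "\<forall>t. p < t \<and> t < r \<longrightarrow> (\<exists>s\<in>P. t \<in> ?F s \<and> {p<..<t} \<inter> ?F s = {})"
    using first_points_right_nbhd[OF R P p witness no_interval] by blast
  obtain t1 where t1: "p < t1" "t1 < r" using \<open>p < r\<close> dense by blast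
  then obtain s1 where "s1 \<in> P" "t1 \<in> ?F s1" using first by blast
  have "{t1<..<r} \<subseteq> ?F s1"
  proof (rule interval_subset_of_first_points[where P = P])
    show "t \<in> ?F s'" if "s \<in> P" "s' \<in> P" "t \<in> ?F s" "s \<le> s'" for t s s'
      using upward that by (auto simp: witness_fiber_def)
  qed (use first t1 \<open>s1 \<in> P\<close> \<open>t1 \<in> ?F s1\<close> in auto)
  then have "\<forall>t. t1 < t \<and> t < min r b \<longrightarrow> [s1, t] \<in> R" by (auto simp: witness_fiber_def)
  moreover have "a \<le> t1" "t1 < min r b" using t1 p \<open>t1 \<in> ?F s1\<close> by (auto simp: witness_fiber_def)
  ultimately have "a \<le> t1 \<and> t1 < min r b \<and> min r b \<le> b \<and> (\<exists>s\<in>P. \<forall>t. t1 < t \<and> t < min r b \<longrightarrow> [s, t] \<in> R)"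
    using \<open>s1 \<in> P\<close> by auto
  then show False using no_uniform by blast
qed

lemma local_witnesses_definable:
  assumes "R \<in> D (Suc (Suc d))" "definable1 P"
  shows "{t # y |t y. length y = d \<and> t \<in> local_witnesses R P a b y} \<in> D (Suc d)"
proof (rule definable_Cons_formula)
  let ?a' = "Suc d" and ?b' = "Suc (Suc d)" and ?s = "Suc (Suc (Suc d))" and ?t' = "Suc (Suc (Suc (Suc d)))"
  let ?f = "Exists (Exists (Exists (Conj (Mem {a..} ?a') (Conj (Less ?a' 0) (Conj (Less 0 ?b')
    (Conj (Mem {..b} ?b') (Conj (Mem P ?s) (Forall (Imp (Conj (Less ?a' ?t') (Less ?t' ?b'))
      (Atom R (?s # ?t' # tail_positions d)))))))))))"
  show "wf_fm D (Suc d) ?f" using assms by (simp add: definable1_intervals)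
  show "holds ?f (t # y) \<longleftrightarrow> t \<in> local_witnesses R P a b y" if "length y = d" for t y
    using that by (auto simp: local_witnesses_def nth_append)
qed

lemma local_witnesses_left_nbhd:
  assumes R: "R \<in> D (Suc (Suc d))" and P: "definable1 P" and y: "length y = d" and p: "a < p" "p < b"
    and witness: "\<And>t. a < t \<Longrightarrow> t < b \<Longrightarrow> \<exists>s\<in>P. s # t # y \<in> R"
    and upward: "\<And>t s s'. a < t \<Longrightarrow> t < b \<Longrightarrow> s \<in> P \<Longrightarrow> s' \<in> P \<Longrightarrow> s # t # y \<in> R \<Longrightarrow> s \<le> s' \<Longrightarrow>
      s' # t # y \<in> R"
  shows "\<exists>q<p. {q<..<p} \<subseteq> local_witnesses R P a b y"
proof (rule locally_finite_union_left_nbhd)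
  show "locally_finite_union (local_witnesses R P a b y) p"
    using definable1_locally_finite_union definable1_fiber[OF local_witnesses_definable[OF R P] y]
    by (simp add: y)
  define Ry where "Ry = {u. length u = 2 \<and> u @ y \<in> R}"
  have "Ry \<in> D 2" using definable_fiber[of R 2 d y] R y by (simp add: Ry_def)
  have Ry_iff: "[s, t] \<in> Ry \<longleftrightarrow> s # t # y \<in> R" for s t by (simp add: Ry_def)
  show "\<exists>t\<in>local_witnesses R P a b y. q < t \<and> t < p" if "q < p" for q
  proof -
    have "max q a < p" using that p by simp
    then have "\<exists>a' b'. max q a \<le> a' \<and> a' < b' \<and> b' \<le> p \<and> (\<exists>s\<in>P. \<forall>t. a' < t \<and> t < b' \<longrightarrow> [s, t] \<in> Ry)"
    proof (rule uniform_witness_on_interval[OF \<open>Ry \<in> D 2\<close> P])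
      show "\<exists>s\<in>P. [s, t] \<in> Ry" if "max q a < t" "t < p" for t
        using witness[of t] that p by (simp add: Ry_iff)
      show "[s', t] \<in> Ry" if "max q a < t" "t < p" "s \<in> P" "s' \<in> P" "[s, t] \<in> Ry" "s \<le> s'" for t s s'
        using upward[of t s s'] that p by (simp add: Ry_iff)
    qed
    then obtain a' b' where ab': "max q a \<le> a'" "a' < b'" "b' \<le> p"
      and uniform: "\<exists>s\<in>P. \<forall>t. a' < t \<and> t < b' \<longrightarrow> s # t # y \<in> R"
      by (auto simp: Ry_iff)
    obtain t where t: "a' < t" "t < b'" using \<open>a' < b'\<close> dense by blast
    have "q \<le> a'" "a \<le> a'" using ab'(1) by simp_all
    then have "q < t" "t < p" "b' \<le> b" using t ab'(3) p(2) by order+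
    then have "t \<in> local_witnesses R P a b y"
      unfolding local_witnesses_def using \<open>a \<le> a'\<close> t uniform by blast
    then show ?thesis using \<open>q < t\<close> \<open>t < p\<close> by blast
  qed
qed

definition uniform_witnesses :: "nat \<Rightarrow> bool" where
  "uniform_witnesses d \<longleftrightarrow> (\<forall>R P a b. R \<in> D (Suc d) \<longrightarrow> definable1 P \<longrightarrow> proper_box d a b \<longrightarrow>
     (\<forall>y\<in>open_box a b. \<exists>s\<in>P. s # y \<in> R) \<longrightarrow>
     (\<forall>y\<in>open_box a b. \<forall>s\<in>P. \<forall>s'\<in>P. s # y \<in> R \<longrightarrow> s \<le> s' \<longrightarrow> s' # y \<in> R) \<longrightarrow>
     (\<exists>a' b'. subbox a' b' a b \<and> (\<exists>s\<in>P. \<forall>y\<in>open_box a' b'. s # y \<in> R)))"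

lemma uniform_witnessesD:
  assumes "uniform_witnesses d" "R \<in> D (Suc d)" "definable1 P" "proper_box d a b"
    and "\<And>y. y \<in> open_box a b \<Longrightarrow> \<exists>s\<in>P. s # y \<in> R"
    and "\<And>y s s'. y \<in> open_box a b \<Longrightarrow> s \<in> P \<Longrightarrow> s' \<in> P \<Longrightarrow> s # y \<in> R \<Longrightarrow> s \<le> s' \<Longrightarrow> s' # y \<in> R"
  shows "\<exists>a' b'. subbox a' b' a b \<and> (\<exists>s\<in>P. \<forall>y\<in>open_box a' b'. s # y \<in> R)"
  by (rule assms(1)[unfolded uniform_witnesses_def, rule_format, OF assms(2-4)]) (use assms(5,6) in blast)+

lemma uniform_left_nbhd_of_local_witnesses:
  assumes IH: "uniform_witnesses d" and R: "R \<in> D (Suc (Suc d))" and P: "definable1 P"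
    and box: "proper_box d a b" and p: "a0 < p" "p < b0"
    and witness: "\<And>t y. a0 < t \<Longrightarrow> t < b0 \<Longrightarrow> y \<in> open_box a b \<Longrightarrow> \<exists>s\<in>P. s # t # y \<in> R"
    and upward: "\<And>t y s s'. a0 < t \<Longrightarrow> t < b0 \<Longrightarrow> y \<in> open_box a b \<Longrightarrow> s \<in> P \<Longrightarrow> s' \<in> P \<Longrightarrow>
      s # t # y \<in> R \<Longrightarrow> s \<le> s' \<Longrightarrow> s' # t # y \<in> R"
  shows "\<exists>a' b'. subbox a' b' a b \<and> (\<exists>w<p. \<forall>y\<in>open_box a' b'. {w<..<p} \<subseteq> local_witnesses R P a0 b0 y)"
proof -
  note len = length_if_in_proper_box[OF box]
  define G where "G = {t # y |t y. length y = d \<and> t \<in> local_witnesses R P a0 b0 y}"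
  have "G \<in> D (Suc d)" unfolding G_def by (rule local_witnesses_definable[OF R P])
  define left_nbhds where "left_nbhds = {w # y |w y. length y = d \<and> (\<forall>t. w < t \<and> t < p \<longrightarrow> t \<in> local_witnesses R P a0 b0 y)}"
  have "left_nbhds \<in> D (Suc d)"
    unfolding left_nbhds_def
    by (rule definable_Cons_formula[where
          f = "Forall (Imp (Conj (Less 0 (Suc d)) (Mem {..<p} (Suc d))) (Atom G (Suc d # tail_positions d)))"])
      (use \<open>G \<in> D (Suc d)\<close> in \<open>auto simp: G_def nth_append definable1_intervals\<close>)
  have "\<exists>a' b'. subbox a' b' a b \<and> (\<exists>w\<in>{..<p}. \<forall>y\<in>open_box a' b'. w # y \<in> left_nbhds)"
  proof (rule uniform_witnessesD[OF IH \<open>left_nbhds \<in> D (Suc d)\<close> definable1_lessThan box])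
    show "\<exists>w\<in>{..<p}. w # y \<in> left_nbhds" if y: "y \<in> open_box a b" for y
    proof -
      obtain q where "q < p" "{q<..<p} \<subseteq> local_witnesses R P a0 b0 y"
        using local_witnesses_left_nbhd[OF R P len[OF y] p] witness upward y by blast
      then have "q # y \<in> left_nbhds" using len[OF y] by (auto simp: left_nbhds_def)
      with \<open>q < p\<close> show ?thesis by blast
    qed
    show "w' # y \<in> left_nbhds" if "w # y \<in> left_nbhds" "w \<le> w'" for y w w'
      using that by (auto simp: left_nbhds_def)
  qed
  then obtain a' b' w where "subbox a' b' a b" "w < p" and "\<forall>y\<in>open_box a' b'. w # y \<in> left_nbhds"
    by blast
  then have "\<forall>y\<in>open_box a' b'. {w<..<p} \<subseteq> local_witnesses R P a0 b0 y"
    by (auto simp: left_nbhds_def)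
  with \<open>subbox a' b' a b\<close> \<open>w < p\<close> show ?thesis by blast
qed

lemma uniform_left_endpoint:
  assumes IH: "uniform_witnesses d" and R: "R \<in> D (Suc (Suc d))" and P: "definable1 P"
    and box: "proper_box d a b"
    and t1: "\<And>y. y \<in> open_box a b \<Longrightarrow> t1 \<in> local_witnesses R P a0 b0 y"
  shows "\<exists>a' b'. subbox a' b' a b \<and>
    (\<exists>v<t1. \<forall>y\<in>open_box a' b'. \<exists>w\<in>P. \<forall>t. v < t \<and> t < t1 \<longrightarrow> w # t # y \<in> R)"
proof -
  note len = length_if_in_proper_box[OF box]
  define left_ends where "left_ends = {v # y |v y. length y = d \<and> (\<exists>w\<in>P. \<forall>t. v < t \<and> t < t1 \<longrightarrow> w # t # y \<in> R)}"
  have "left_ends \<in> D (Suc d)"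
    unfolding left_ends_def
    by (rule definable_Cons_formula[where f = "Exists (Conj (Mem P (Suc d)) (Forall (Imp
          (Conj (Less 0 (Suc (Suc d))) (Mem {..<t1} (Suc (Suc d))))
          (Atom R (Suc d # Suc (Suc d) # tail_positions d)))))"])
      (use R P in \<open>auto simp: nth_append definable1_intervals\<close>)
  have "\<exists>a' b'. subbox a' b' a b \<and> (\<exists>v\<in>{..<t1}. \<forall>y\<in>open_box a' b'. v # y \<in> left_ends)"
  proof (rule uniform_witnessesD[OF IH \<open>left_ends \<in> D (Suc d)\<close> definable1_lessThan box])
    show "\<exists>v\<in>{..<t1}. v # y \<in> left_ends" if y: "y \<in> open_box a b" for y
    proof -
      obtain a' b' s where "a' < t1" "t1 < b'" "s \<in> P" and uniform: "\<forall>t. a' < t \<and> t < b' \<longrightarrow> s # t # y \<in> R"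
        using t1[OF y] unfolding local_witnesses_def by blast
      have "\<forall>t. a' < t \<and> t < t1 \<longrightarrow> s # t # y \<in> R"
        using uniform \<open>t1 < b'\<close> less_trans by blast
      then have "a' # y \<in> left_ends" using len[OF y] \<open>s \<in> P\<close> unfolding left_ends_def by blast
      then show ?thesis using \<open>a' < t1\<close> by blast
    qed
    show "v' # y \<in> left_ends" if "v # y \<in> left_ends" "v \<le> v'" for y v v'
      using that unfolding left_ends_def by (auto dest: le_less_trans)
  qed
  then obtain a' b' v where "subbox a' b' a b" "v < t1" and "\<forall>y\<in>open_box a' b'. v # y \<in> left_ends"
    by blast
  then have "\<forall>y\<in>open_box a' b'. \<exists>w\<in>P. \<forall>t. v < t \<and> t < t1 \<longrightarrow> w # t # y \<in> R"
    by (auto simp: left_ends_def)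
  with \<open>subbox a' b' a b\<close> \<open>v < t1\<close> show ?thesis by blast
qed

lemma uniform_witness_on_strip:
  assumes IH: "uniform_witnesses d" and R: "R \<in> D (Suc (Suc d))" and P: "definable1 P"
    and box: "proper_box d a b"
    and witness: "\<And>y. y \<in> open_box a b \<Longrightarrow> \<exists>w\<in>P. \<forall>t. v < t \<and> t < t1 \<longrightarrow> w # t # y \<in> R"
    and upward: "\<And>t y s s'. v < t \<Longrightarrow> t < t1 \<Longrightarrow> y \<in> open_box a b \<Longrightarrow> s \<in> P \<Longrightarrow> s' \<in> P \<Longrightarrow>
      s # t # y \<in> R \<Longrightarrow> s \<le> s' \<Longrightarrow> s' # t # y \<in> R"
  shows "\<exists>a' b'. subbox a' b' a b \<and> (\<exists>w\<in>P. \<forall>x\<in>open_box (v # a') (t1 # b'). w # x \<in> R)"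
proof -
  note len = length_if_in_proper_box[OF box]
  define strip_witnesses where "strip_witnesses = {w # y |w y. length y = d \<and> (\<forall>t. v < t \<and> t < t1 \<longrightarrow> w # t # y \<in> R)}"
  have "strip_witnesses \<in> D (Suc d)"
    unfolding strip_witnesses_def
    by (rule definable_Cons_formula[where f = "Forall (Imp (Conj (Mem {v<..} (Suc d)) (Mem {..<t1} (Suc d)))
          (Atom R (0 # Suc d # tail_positions d)))"])
      (use R in \<open>auto simp: nth_append definable1_intervals\<close>)
  have "\<exists>a' b'. subbox a' b' a b \<and> (\<exists>w\<in>P. \<forall>y\<in>open_box a' b'. w # y \<in> strip_witnesses)"
  proof (rule uniform_witnessesD[OF IH \<open>strip_witnesses \<in> D (Suc d)\<close> P box])
    show "\<exists>w\<in>P. w # y \<in> strip_witnesses" if "y \<in> open_box a b" for y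
      using witness[OF that] len[OF that] by (auto simp: strip_witnesses_def)
    show "s' # y \<in> strip_witnesses" if y: "y \<in> open_box a b" and s: "s \<in> P" "s' \<in> P" "s # y \<in> strip_witnesses" "s \<le> s'"
      for y s s'
    proof -
      have "s # t # y \<in> R" if "v < t" "t < t1" for t using s(3) that by (simp add: strip_witnesses_def)
      then have "s' # t # y \<in> R" if "v < t" "t < t1" for t using upward[OF that y s(1,2) _ s(4)] that by blast
      then show ?thesis using len[OF y] by (simp add: strip_witnesses_def)
    qed
  qed
  then obtain a' b' w where "subbox a' b' a b" "w \<in> P" and uniform: "\<forall>y\<in>open_box a' b'. w # y \<in> strip_witnesses"
    by blast
  have "w # x \<in> R" if "x \<in> open_box (v # a') (t1 # b')" for x
    using that by (rule in_open_box_Cons_cases) (use uniform in \<open>auto simp: strip_witnesses_def\<close>)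
  with \<open>subbox a' b' a b\<close> \<open>w \<in> P\<close> show ?thesis by blast
qed

lemma common_strip_of_local_witnesses:
  assumes IH: "uniform_witnesses d" and R: "R \<in> D (Suc (Suc d))" and P: "definable1 P"
    and box: "proper_box d a b" and "a0 < b0"
    and witness: "\<And>t y. a0 < t \<Longrightarrow> t < b0 \<Longrightarrow> y \<in> open_box a b \<Longrightarrow> \<exists>s\<in>P. s # t # y \<in> R"
    and upward: "\<And>t y s s'. a0 < t \<Longrightarrow> t < b0 \<Longrightarrow> y \<in> open_box a b \<Longrightarrow> s \<in> P \<Longrightarrow> s' \<in> P \<Longrightarrow>
      s # t # y \<in> R \<Longrightarrow> s \<le> s' \<Longrightarrow> s' # t # y \<in> R"
  shows "\<exists>a' b' v t1. subbox a' b' a b \<and> a0 \<le> v \<and> v < t1 \<and> t1 \<le> b0 \<and>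
    (\<forall>y\<in>open_box a' b'. \<exists>w\<in>P. \<forall>t. v < t \<and> t < t1 \<longrightarrow> w # t # y \<in> R)"
proof -
  obtain p where p: "a0 < p" "p < b0" using \<open>a0 < b0\<close> dense by blast
  have "\<exists>a1 b1. subbox a1 b1 a b \<and> (\<exists>w<p. \<forall>y\<in>open_box a1 b1. {w<..<p} \<subseteq> local_witnesses R P a0 b0 y)"
    using witness upward by (rule uniform_left_nbhd_of_local_witnesses[OF IH R P box p])
  then obtain a1 b1 w0 where sub1: "subbox a1 b1 a b" and "w0 < p"
    and near_p: "\<forall>y\<in>open_box a1 b1. {w0<..<p} \<subseteq> local_witnesses R P a0 b0 y"
    by blast
  obtain t1 where t1: "max w0 a0 < t1" "t1 < p" using \<open>w0 < p\<close> p(1) dense by (metis max_less_iff_conj)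
  have "t1 \<in> {w0<..<p}" using t1 by simp
  then have "t1 \<in> local_witnesses R P a0 b0 y" if "y \<in> open_box a1 b1" for y
    using near_p that by blast
  then obtain a2 b2 v0 where sub2: "subbox a2 b2 a1 b1" and "v0 < t1"
    and strip: "\<forall>y\<in>open_box a2 b2. \<exists>w\<in>P. \<forall>t. v0 < t \<and> t < t1 \<longrightarrow> w # t # y \<in> R"
    using uniform_left_endpoint[OF IH R P proper_box_if_subbox[OF box sub1]] by blast
  have "subbox a2 b2 a b" using sub2 sub1 by (rule subbox_trans)
  moreover have "a0 \<le> max v0 a0" "max v0 a0 < t1" "t1 \<le> b0" using \<open>v0 < t1\<close> t1 p by auto
  moreover have "\<forall>y\<in>open_box a2 b2. \<exists>w\<in>P. \<forall>t. max v0 a0 < t \<and> t < t1 \<longrightarrow> w # t # y \<in> R"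
    using strip unfolding max_less_iff_conj by blast
  ultimately show ?thesis by blast
qed

lemma uniform_witnesses_0: "uniform_witnesses 0"
  unfolding uniform_witnesses_def
proof (intro allI impI)
  fix R P and a b :: "'a list"
  assume "proper_box 0 a b" and witness: "\<forall>y\<in>open_box a b. \<exists>s\<in>P. s # y \<in> R"
  then have "a = []" by (simp add: proper_box_def)
  then have "subbox [] [] a b" by (simp add: subbox_def proper_box_def)
  have "[] \<in> open_box a b" using \<open>a = []\<close> by (simp add: open_box_def)
  then obtain s where "s \<in> P" "[s] \<in> R" using witness by blast
  then have "\<forall>y\<in>open_box [] []. s # y \<in> R" by (simp add: open_box_def)
  with \<open>s \<in> P\<close> \<open>subbox [] [] a b\<close>
  show "\<exists>a' b'. subbox a' b' a b \<and> (\<exists>s\<in>P. \<forall>y\<in>open_box a' b'. s # y \<in> R)" by blast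
qed

lemma uniform_witnesses_Suc:
  assumes IH: "uniform_witnesses d"
  shows "uniform_witnesses (Suc d)"
  unfolding uniform_witnesses_def
proof (intro allI impI)
  fix R P and a b :: "'a list"
  assume R: "R \<in> D (Suc (Suc d))" and P: "definable1 P" and "proper_box (Suc d) a b"
    and witness: "\<forall>y\<in>open_box a b. \<exists>s\<in>P. s # y \<in> R"
    and upward: "\<forall>y\<in>open_box a b. \<forall>s\<in>P. \<forall>s'\<in>P. s # y \<in> R \<longrightarrow> s \<le> s' \<longrightarrow> s' # y \<in> R"
  then obtain a0 as b0 bs where ab: "a = a0 # as" "b = b0 # bs" "a0 < b0" and box: "proper_box d as bs"
    by (elim proper_box_Suc_cases)
  have Cons_in: "t # y \<in> open_box a b \<longleftrightarrow> a0 < t \<and> t < b0 \<and> y \<in> open_box as bs" for t y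
    by (simp add: ab Cons_in_open_box_iff)
  have "\<exists>as' bs' v t1. subbox as' bs' as bs \<and> a0 \<le> v \<and> v < t1 \<and> t1 \<le> b0 \<and>
      (\<forall>y\<in>open_box as' bs'. \<exists>w\<in>P. \<forall>t. v < t \<and> t < t1 \<longrightarrow> w # t # y \<in> R)"
  proof (rule common_strip_of_local_witnesses[OF IH R P box \<open>a0 < b0\<close>])
    show "\<exists>s\<in>P. s # t # y \<in> R" if "a0 < t" "t < b0" "y \<in> open_box as bs" for t y
      using witness that Cons_in by blast
    show "s' # t # y \<in> R" if "a0 < t" "t < b0" "y \<in> open_box as bs" "s \<in> P" "s' \<in> P" "s # t # y \<in> R"
      "s \<le> s'" for t y s s'
      using upward that Cons_in by blast
  qed
  then obtain as' bs' v t1 where sub: "subbox as' bs' as bs" and vt: "a0 \<le> v" "v < t1" "t1 \<le> b0"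
    and strip: "\<forall>y\<in>open_box as' bs'. \<exists>w\<in>P. \<forall>t. v < t \<and> t < t1 \<longrightarrow> w # t # y \<in> R"
    by blast
  have "\<exists>a' b'. subbox a' b' as' bs' \<and> (\<exists>w\<in>P. \<forall>x\<in>open_box (v # a') (t1 # b'). w # x \<in> R)"
  proof (rule uniform_witness_on_strip[OF IH R P proper_box_if_subbox[OF box sub]])
    show "\<exists>w\<in>P. \<forall>t. v < t \<and> t < t1 \<longrightarrow> w # t # y \<in> R" if "y \<in> open_box as' bs'" for y
      using strip that by blast
    show "s' # t # y \<in> R" if "v < t" "t < t1" "y \<in> open_box as' bs'" "s \<in> P" "s' \<in> P" "s # t # y \<in> R"
      "s \<le> s'" for t y s s'
    proof -
      have "a0 < t" "t < b0" using that(1,2) vt by order+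
      then have "t # y \<in> open_box a b" using that(3) open_box_mono[OF sub] Cons_in by blast
      then show ?thesis using upward that(4-7) by blast
    qed
  qed
  then obtain as'' bs'' w where "subbox as'' bs'' as' bs'" "w \<in> P"
    and "\<forall>x\<in>open_box (v # as'') (t1 # bs''). w # x \<in> R"
    by blast
  moreover have "subbox (v # as'') (t1 # bs'') a b"
    using vt subbox_trans[OF \<open>subbox as'' bs'' as' bs'\<close> sub] by (simp add: ab subbox_Cons)
  ultimately show "\<exists>a' b'. subbox a' b' a b \<and> (\<exists>s\<in>P. \<forall>y\<in>open_box a' b'. s # y \<in> R)"
    by blast
qed

lemma uniform_witnesses: "uniform_witnesses d"
  by (induction d) (use uniform_witnesses_0 uniform_witnesses_Suc in auto)

section \<open>The dimension of an increasing union\<close>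

lemma interior_of_increasing_union:
  assumes XX: "XX \<in> D (Suc n)"
    and increasing: "\<And>r r'. z < r \<Longrightarrow> r < r' \<Longrightarrow> fiber XX r \<subseteq> fiber XX r'"
    and ks: "ks \<in> proj_indices n d"
    and "has_interior d (coord_proj ks ` (\<Union>r\<in>{r. z < r}. fiber XX r))"
  shows "\<exists>r>z. has_interior d (coord_proj ks ` fiber XX r)"
proof -
  define R where "R = coord_proj (0 # map Suc ks) ` XX"
  have "length ks = d" "\<forall>i\<in>set (0 # map Suc ks). i < Suc n" using ks by (auto simp: proj_indices_def)
  then have "R \<in> D (Suc d)"
    using definable_map_nth_image[OF XX, of "0 # map Suc ks"] by (simp add: R_def coord_proj_def)
  have R_iff: "r # y \<in> R \<longleftrightarrow> y \<in> coord_proj ks ` fiber XX r" for r y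
    unfolding R_def using definable_length[OF XX] by (intro Cons_in_coord_proj_Suc_image) force
  obtain a b where box: "proper_box d a b"
    and covered: "open_box a b \<subseteq> coord_proj ks ` (\<Union>r\<in>{r. z < r}. fiber XX r)"
    using assms(4) unfolding has_interior_iff by blast
  have "\<exists>a' b'. subbox a' b' a b \<and> (\<exists>r\<in>{z<..}. \<forall>y\<in>open_box a' b'. r # y \<in> R)"
  proof (rule uniform_witnessesD[OF uniform_witnesses \<open>R \<in> D (Suc d)\<close> definable1_greaterThan box])
    show "\<exists>r\<in>{z<..}. r # y \<in> R" if "y \<in> open_box a b" for y
    proof -
      have "y \<in> coord_proj ks ` (\<Union>r\<in>{r. z < r}. fiber XX r)" using covered that by (rule subsetD)
      then obtain x where "x \<in> (\<Union>r\<in>{r. z < r}. fiber XX r)" "y = coord_proj ks x" by (rule imageE)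
      moreover from this(1) obtain r where "z < r" "x \<in> fiber XX r" by auto
      ultimately have "z < r" "y \<in> coord_proj ks ` fiber XX r" by auto
      then show ?thesis unfolding R_iff by blast
    qed
    show "r' # y \<in> R" if "r \<in> {z<..}" "r \<le> r'" "r # y \<in> R" for y r r'
    proof -
      have "fiber XX r \<subseteq> fiber XX r'"
        using increasing[of r r'] that(1,2) by (cases "r = r'") auto
      then show ?thesis using that(3) unfolding R_iff by blast
    qed
  qed
  then obtain a' b' r where "subbox a' b' a b" "z < r" and "\<forall>y\<in>open_box a' b'. r # y \<in> R"
    by auto
  then have "open_box a' b' \<subseteq> coord_proj ks ` fiber XX r" unfolding R_iff by blast
  moreover have "proper_box d a' b'" using box \<open>subbox a' b' a b\<close> by (rule proper_box_if_subbox)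
  ultimately show ?thesis using \<open>z < r\<close> unfolding has_interior_iff by blast
qed

end

theorem mainTheorem15:
  fixes D :: "nat \<Rightarrow> 'a::{dense_linorder,no_top,no_bot} list set set"
    and z :: 'a and n :: nat and XX :: "'a list set"
  assumes "is_expansion_defsets D"
    and "definably_complete D"
    and "locally_o_minimal D"
    and "XX \<in> D (Suc n)"
    and "\<And>r r'. z < r \<Longrightarrow> r < r' \<Longrightarrow> fiber XX r \<subseteq> fiber XX r'"
  shows "dim n (\<Union>r\<in>{r. z < r}. fiber XX r) = (SUP r\<in>{r. z < r}. dim n (fiber XX r))"
proof -
  interpret dc_locally_o_minimal D
    using assms(1-3) by unfold_locales (auto simp: is_expansion_defsets_def)
  let ?U = "\<Union>r\<in>{r. z < r}. fiber XX r"
  have "dim n ?U \<le> (SUP r\<in>{r. z < r}. dim n (fiber XX r))"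
  proof (cases "?U = {}")
    case True
    then show ?thesis by (simp add: dim_eq_Max_interior_dims)
  next
    case False
    then obtain d ks where dim_U: "dim n ?U = ereal (of_nat d)" and ks: "ks \<in> proj_indices n d"
      and "has_interior d (coord_proj ks ` ?U)"
      by (rule dim_attained)
    then obtain r where "z < r" and "has_interior d (coord_proj ks ` fiber XX r)"
      using interior_of_increasing_union[OF assms(4,5) ks] by blast
    then have "dim n ?U \<le> dim n (fiber XX r)" using dim_U dim_ge_if_interior[OF ks] by simp
    also have "\<dots> \<le> (SUP r\<in>{r. z < r}. dim n (fiber XX r))" using \<open>z < r\<close> by (intro SUP_upper) auto
    finally show ?thesis .
  qed
  moreover have "(SUP r\<in>{r. z < r}. dim n (fiber XX r)) \<le> dim n ?U"
    by (rule SUP_least) (auto intro: dim_mono)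
  ultimately show ?thesis by (rule antisym)
qed

end
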